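(* Let an FCA with state set $S$, neighborhood $m=l+1+r$, local rule $f$ and boundary type $b\in\{\text{null},\text{periodic}\}$ be given, and let $G$ be its reversibility graph. Let $N$ be a negative vertex of $G$ with value $k\ge 1$, and let $C_1,\dots,C_i$ be circuits of $G$ passing through $N$, of lengths $r_1,\dots,r_i$. Then for all integers $x_1,\dots,x_i\ge 0$ the FCA is not $(k+x_1r_1+\dots+x_ir_i)$-cell-reversible.
   Context: A one-dimensional finite cellular automaton (FCA) is given by a state set $S=\{0,1,\dots,s-1\}$, integers $l,r\ge 0$ with neighborhood size $m=l+1+r\ge 2$, a local rule $f:S^m\to S$, and a boundary type $b\in\{\text{null},\text{periodic}\}$. For $n\ge 1$ the global map $\tau_n:S^n\to S^n$ sends $(x_0,\dots,x_{n-1})$ to $(y_0,\dots,y_{n-1})$ with $y_i=f(x_{i-l},\dots,x_{i+r})$, where for the null boundary $x_j=0$ whenever $j<0$ or $j>n-1$, and for the periodic boundary indices are taken modulo $n$. The FCA is $n$-cell-reversible if $\tau_n$ is a bijection (equivalently, since $S^n$ is finite, surjective). Reversibility graph (RG). Null boundary: vertices are subsets of $S^{m-1}$; the root is $N_0=\{(a_1,\dots,a_{m-1})\in S^{m-1}: a_1=\dots=a_l=0\}$; the acceptance set is $R=\{(a_1,\dots,a_{m-1})\in S^{m-1}: a_{m-r}=\dots=a_{m-1}=0\}$ (so $R=S^{m-1}$ if $r=0$); for a subset $N$ and $c\in S$, $\delta(N,c)=\{(a_1,\dots,a_{m-1})\in S^{m-1}:\exists a_0\in S,\ (a_0,\dots,a_{m-2})\in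 N,\ f(a_0,a_1,\dots,a_{m-1})=c\}$. Periodic boundary: vertices are subsets of $S^{m-1}\times S^{m-1}$; the root and the acceptance set are $N_0=R=\{(a,a):a\in S^{m-1}\}$; $\delta(N,c)=\{((a_1,\dots,a_{m-1}),(b_1,\dots,b_{m-1})):\exists b_0\in S,\ ((a_1,\dots,a_{m-1}),(b_0,\dots,b_{m-2}))\in N,\ f(b_0,\dots,b_{m-1})=c\}$. In both cases the RG is the directed graph whose vertex set consists of all subsets obtainable from $N_0$ by repeatedly applying $\delta$ (including $N_0$; equal subsets are the same vertex; the empty set may occur), with, for each vertex $N$ and each $c\in S$, an edge labelled $c$ from $N$ to $\delta(N,c)$. The value of a vertex $N$ is the length of a shortest directed path from $N_0$ to $N$. A vertex $N$ is negative if $N\cap R=\emptyset$. A circuit is an elementary directed cycle of the RG (a closed directed path with no repeated vertex other than its start = end; a loop is a circuit of length $1$); its length is its number of edges, and it passes through $N$ if $N$ is one of its vertices. *)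

theory Defs
  imports Main
begin

text \<open>States are S = {0..<s}; a local rule is f :: nat list => nat applied to
  lists of length m = l+1+r. Configurations of n cells are lists of length n over S.\<close>

definition tuples :: "nat \<Rightarrow> nat \<Rightarrow> nat list set" where
  "tuples s k = {a. length a = k \<and> set a \<subseteq> {0..<s}}"

definition configs :: "nat \<Rightarrow> nat \<Rightarrow> nat list set" where
  "configs s n = tuples s n"

datatype boundary = Null | Periodic

definition cell_val :: "boundary \<Rightarrow> nat list \<Rightarrow> int \<Rightarrow> nat" where
  "cell_val b xs j = (case b of
      Null \<Rightarrow> (if 0 \<le> j \<and> j < int (length xs) then xs ! nat j else 0)
    | Periodic \<Rightarrow> xs ! nat (j mod int (length xs)))"

definition global_map :: "nat \<Rightarrow> nat \<Rightarrow> (nat list \<Rightarrow> nat) \<Rightarrow> boundary \<Rightarrow> nat list \<Rightarrow> nat list" where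
  "global_map l r f b xs =
     map (\<lambda>i. f (map (cell_val b xs) [int i - int l .. int i + int r])) [0..<length xs]"

definition n_cell_reversible :: "nat \<Rightarrow> nat \<Rightarrow> nat \<Rightarrow> (nat list \<Rightarrow> nat) \<Rightarrow> boundary \<Rightarrow> nat \<Rightarrow> bool" where
  "n_cell_reversible s l r f b n = bij_betw (global_map l r f b) (configs s n) (configs s n)"

definition rg_vertices :: "'v set \<Rightarrow> ('v set \<Rightarrow> nat \<Rightarrow> 'v set) \<Rightarrow> nat set \<Rightarrow> 'v set set" where
  "rg_vertices root delta S = {N. \<exists>w. set w \<subseteq> S \<and> foldl delta root w = N}"

definition rg_value :: "'v set \<Rightarrow> ('v set \<Rightarrow> nat \<Rightarrow> 'v set) \<Rightarrow> nat set \<Rightarrow> 'v set \<Rightarrow> nat" where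
  "rg_value root delta S N = (LEAST k. \<exists>w. length w = k \<and> set w \<subseteq> S \<and> foldl delta root w = N)"

definition rg_circuit :: "'v set \<Rightarrow> ('v set \<Rightarrow> nat \<Rightarrow> 'v set) \<Rightarrow> nat set \<Rightarrow> 'v set list \<Rightarrow> bool" where
  "rg_circuit root delta S vs \<longleftrightarrow> vs \<noteq> [] \<and> distinct vs \<and> set vs \<subseteq> rg_vertices root delta S \<and>
     (\<forall>j < length vs. \<exists>c\<in>S. delta (vs ! j) c = vs ! ((j + 1) mod length vs))"

definition null_root :: "nat \<Rightarrow> nat \<Rightarrow> nat \<Rightarrow> nat list set" where
  "null_root s l r = {a \<in> tuples s (l + r). \<forall>j<l. a ! j = 0}"

definition null_accept :: "nat \<Rightarrow> nat \<Rightarrow> nat \<Rightarrow> nat list set" where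
  "null_accept s l r = {a \<in> tuples s (l + r). \<forall>j. l \<le> j \<and> j < l + r \<longrightarrow> a ! j = 0}"

definition null_delta :: "nat \<Rightarrow> nat \<Rightarrow> nat \<Rightarrow> (nat list \<Rightarrow> nat) \<Rightarrow> nat list set \<Rightarrow> nat \<Rightarrow> nat list set" where
  "null_delta s l r f N c = {a \<in> tuples s (l + r).
      \<exists>a0<s. (a0 # butlast a) \<in> N \<and> f (a0 # a) = c}"

definition per_root :: "nat \<Rightarrow> nat \<Rightarrow> nat \<Rightarrow> (nat list \<times> nat list) set" where
  "per_root s l r = {(a, a) | a. a \<in> tuples s (l + r)}"

definition per_delta :: "nat \<Rightarrow> nat \<Rightarrow> nat \<Rightarrow> (nat list \<Rightarrow> nat) \<Rightarrow>
    (nat list \<times> nat list) set \<Rightarrow> nat \<Rightarrow> (nat list \<times> nat list) set" where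
  "per_delta s l r f N c = {(a, bb). a \<in> tuples s (l + r) \<and> bb \<in> tuples s (l + r) \<and>
      (\<exists>b0<s. (a, b0 # butlast bb) \<in> N \<and> f (b0 # bb) = c)}"

end

theory Submission
  imports Defs
begin

text \<open>Reading the image y = tau_n(z) letter by letter through the reversibility graph, the
  vertex reached after t letters always contains the window of z at t (for the periodic
  boundary: the pair of the window at 0 and the window at t). After all n letters this
  window lies in the acceptance set. A vertex of value k lies on a word of length k from
  the root, and every circuit through it yields a closed word of its length, so every
  n = k + x_1 r_1 + ... + x_i r_i is the length of a word leading to the negative vertex N.
  If tau_n were surjective, that word would have a preimage, whose window would have to
  lie in N and in the acceptance set at once.\<close>

lemma foldl_concat_replicate_fixpoint:
  assumes "foldl delta N u = N"
  shows "foldl delta N (concat (replicate n u)) = N"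
  by (induction n) (simp_all add: assms)

lemma rg_circuit_closed_word:
  assumes "rg_circuit root delta S C" "N \<in> set C"
  shows "\<exists>u. length u = length C \<and> set u \<subseteq> S \<and> foldl delta N u = N"
proof -
  let ?L = "length C"
  have L: "?L > 0" using assms(1) unfolding rg_circuit_def by simp
  obtain p where p: "p < ?L" "C ! p = N" using assms(2) by (metis in_set_conv_nth)
  have "\<exists>u. length u = t \<and> set u \<subseteq> S \<and> foldl delta N u = C ! ((p + t) mod ?L)" for t
  proof (induction t)
    case 0
    then show ?case using p by simp
  next
    case (Suc t)
    then obtain u where u: "length u = t" "set u \<subseteq> S" "foldl delta N u = C ! ((p + t) mod ?L)"
      by blast
    have "(p + t) mod ?L < ?L" using L by simp
    then obtain c where "c \<in> S" "delta (C ! ((p + t) mod ?L)) c = C ! (((p + t) mod ?L + 1) mod ?L)"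
      using assms(1) unfolding rg_circuit_def by blast
    then show ?case using u by (intro exI[of _ "u @ [c]"]) (simp add: mod_Suc_eq)
  qed
  from this[of ?L] show ?thesis using p by simp
qed

lemma closed_word_linear_combination:
  fixes len x :: "nat \<Rightarrow> nat"
  assumes "\<forall>j<i. \<exists>u. length u = len j \<and> set u \<subseteq> S \<and> foldl delta N u = N"
  shows "\<exists>v. length v = (\<Sum>j<i. x j * len j) \<and> set v \<subseteq> S \<and> foldl delta N v = N"
  using assms
proof (induction i)
  case 0
  show ?case by (intro exI[of _ "[]"]) simp
next
  case (Suc i)
  then obtain v where v: "length v = (\<Sum>j<i. x j * len j)" "set v \<subseteq> S" "foldl delta N v = N"
    by auto
  obtain u where u: "length u = len i" "set u \<subseteq> S" "foldl delta N u = N"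
    using Suc.prems by blast
  have "length (concat (replicate (x i) u)) = x i * len i"
    by (simp add: length_concat sum_list_replicate u(1))
  then show ?case using v u foldl_concat_replicate_fixpoint[OF u(3)]
    by (intro exI[of _ "v @ concat (replicate (x i) u)"]) auto
qed

lemma rg_value_word:
  assumes "N \<in> rg_vertices root delta S"
  shows "\<exists>w. length w = rg_value root delta S N \<and> set w \<subseteq> S \<and> foldl delta root w = N"
proof -
  have "\<exists>k w. length w = k \<and> set w \<subseteq> S \<and> foldl delta root w = N"
    using assms unfolding rg_vertices_def by auto
  from LeastI_ex[OF this] show ?thesis unfolding rg_value_def by blast
qed

lemma rg_word_through_circuits:
  fixes len x :: "nat \<Rightarrow> nat"
  assumes "N \<in> rg_vertices root delta S"
    and "\<forall>j<i. \<exists>C. rg_circuit root delta S C \<and> N \<in> set C \<and> length C = len j"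
  shows "\<exists>y. length y = rg_value root delta S N + (\<Sum>j<i. x j * len j)
           \<and> set y \<subseteq> S \<and> foldl delta root y = N"
proof -
  obtain w where w: "length w = rg_value root delta S N" "set w \<subseteq> S" "foldl delta root w = N"
    using rg_value_word[OF assms(1)] by blast
  have "\<forall>j<i. \<exists>u. length u = len j \<and> set u \<subseteq> S \<and> foldl delta N u = N"
  proof (intro allI impI)
    fix j assume "j < i"
    then obtain C where C: "rg_circuit root delta S C" "N \<in> set C" "length C = len j"
      using assms(2) by blast
    from rg_circuit_closed_word[OF C(1,2)] show "\<exists>u. length u = len j \<and> set u \<subseteq> S \<and> foldl delta N u = N"
      unfolding C(3) .
  qed
  from closed_word_linear_combination[OF this, of x] obtain v
    where "length v = (\<Sum>j<i. x j * len j)" "set v \<subseteq> S" "foldl delta N v = N"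
    by blast
  then show ?thesis using w by (intro exI[of _ "w @ v"]) auto
qed

text \<open>The cells x_{t-l}, ..., x_{t+r-1}: the last m - 1 cells of the neighbourhood of cell t - 1.\<close>

definition window :: "boundary \<Rightarrow> nat list \<Rightarrow> nat \<Rightarrow> nat \<Rightarrow> nat \<Rightarrow> nat list" where
  "window b x l r t = map (cell_val b x) [int t - int l .. int t + int r - 1]"

lemma length_window [simp]: "length (window b x l r t) = l + r"
  unfolding window_def by simp

lemma nth_window: "k < l + r \<Longrightarrow> window b x l r t ! k = cell_val b x (int t - int l + int k)"
  unfolding window_def by simp

lemma cell_val_less:
  assumes "set x \<subseteq> {0..<s}" "x \<noteq> []"
  shows "cell_val b x j < s"
proof -
  have "nat (j mod int (length x)) < length x" using assms(2) by (simp add: nat_less_iff)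
  moreover have "0 < s" using assms by (cases x) auto
  ultimately show ?thesis using assms(1) unfolding cell_val_def
    by (auto split: boundary.split simp: subset_iff)
qed

lemma window_in_tuples:
  assumes "set x \<subseteq> {0..<s}" "x \<noteq> []"
  shows "window b x l r t \<in> tuples s (l + r)"
  unfolding tuples_def window_def using cell_val_less[OF assms] by auto

lemma length_global_map [simp]: "length (global_map l r f b x) = length x"
  unfolding global_map_def by simp

lemma window_Suc_butlast:
  assumes "l + r \<ge> 1"
  shows "cell_val b x (int t - int l) # butlast (window b x l r (Suc t)) = window b x l r t"
  using assms by (intro nth_equalityI) (auto simp: nth_window nth_Cons nth_butlast algebra_simps split: nat.split)

lemma nth_global_map_window:
  assumes "t < length x"
  shows "global_map l r f b x ! t = f (cell_val b x (int t - int l) # window b x l r (Suc t))"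
proof -
  have "cell_val b x (int t - int l) # window b x l r (Suc t)
        = map (cell_val b x) [int t - int l .. int t + int r]"
    by (intro nth_equalityI) (auto simp: nth_window nth_Cons algebra_simps split: nat.split)
  then show ?thesis unfolding global_map_def using assms by simp
qed

lemma null_delta_window_step:
  assumes "set x \<subseteq> {0..<s}" "t < length x" "l + r \<ge> 1" "window b x l r t \<in> A"
  shows "window b x l r (Suc t) \<in> null_delta s l r f A (global_map l r f b x ! t)"
  unfolding null_delta_def
  using assms window_in_tuples[OF assms(1)] cell_val_less[OF assms(1)]
    window_Suc_butlast[OF assms(3)] nth_global_map_window[OF assms(2)]
  by (fastforce intro!: exI[of _ "cell_val b x (int t - int l)"])

lemma per_delta_window_step:
  assumes "set x \<subseteq> {0..<s}" "t < length x" "l + r \<ge> 1" "(a, window b x l r t) \<in> A"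
    and "a \<in> tuples s (l + r)"
  shows "(a, window b x l r (Suc t)) \<in> per_delta s l r f A (global_map l r f b x ! t)"
  unfolding per_delta_def
  using assms window_in_tuples[OF assms(1)] cell_val_less[OF assms(1)]
    window_Suc_butlast[OF assms(3)] nth_global_map_window[OF assms(2)]
  by (fastforce intro!: exI[of _ "cell_val b x (int t - int l)"])

lemma window_in_null_run:
  assumes "set x \<subseteq> {0..<s}" "x \<noteq> []" "l + r \<ge> 1" "t \<le> length x"
  shows "window Null x l r t
           \<in> foldl (null_delta s l r f) (null_root s l r) (take t (global_map l r f Null x))"
  using assms(4)
proof (induction t)
  case 0
  show ?case using window_in_tuples[OF assms(1,2)]
    by (simp add: null_root_def nth_window cell_val_def)
next
  case (Suc t)
  then show ?case using null_delta_window_step[OF assms(1) _ assms(3)]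
    by (simp add: take_Suc_conv_app_nth)
qed

lemma window_pair_in_per_run:
  assumes "set x \<subseteq> {0..<s}" "x \<noteq> []" "l + r \<ge> 1" "t \<le> length x"
  shows "(window Periodic x l r 0, window Periodic x l r t)
           \<in> foldl (per_delta s l r f) (per_root s l r) (take t (global_map l r f Periodic x))"
  using assms(4)
proof (induction t)
  case 0
  show ?case using window_in_tuples[OF assms(1,2)] by (simp add: per_root_def)
next
  case (Suc t)
  then show ?case
    using per_delta_window_step[OF assms(1) _ assms(3)] window_in_tuples[OF assms(1,2)]
    by (simp add: take_Suc_conv_app_nth)
qed

lemma window_end_null_accept:
  assumes "window Null x l r (length x) \<in> tuples s (l + r)"
  shows "window Null x l r (length x) \<in> null_accept s l r"
  using assms unfolding null_accept_def by (auto simp: nth_window cell_val_def)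

lemma window_end_periodic:
  assumes "x \<noteq> []"
  shows "window Periodic x l r (length x) = window Periodic x l r 0"
proof (rule nth_equalityI)
  fix k assume "k < length (window Periodic x l r (length x))"
  then have k: "k < l + r" by simp
  have "(int (length x) - int l + int k) mod int (length x) = (int 0 - int l + int k) mod int (length x)"
    by (metis add.commute add.left_neutral diff_add_eq mod_add_self2 of_nat_0)
  then show "window Periodic x l r (length x) ! k = window Periodic x l r 0 ! k"
    by (simp only: nth_window[OF k] cell_val_def boundary.case)
qed simp

lemma n_cell_reversible_preimage:
  assumes "n_cell_reversible s l r f b n" "length y = n" "set y \<subseteq> {0..<s}"
  obtains z where "length z = n" "set z \<subseteq> {0..<s}" "global_map l r f b z = y"
proof -
  have "y \<in> global_map l r f b ` configs s n"
    using assms unfolding n_cell_reversible_def bij_betw_def configs_def tuples_def by auto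
  then show ?thesis using that unfolding configs_def tuples_def by blast
qed

lemma not_null_reversible_if_negative:
  assumes "length y = n" "n \<ge> 1" "set y \<subseteq> {0..<s}" "l + r \<ge> 1"
    and "foldl (null_delta s l r f) (null_root s l r) y \<inter> null_accept s l r = {}"
  shows "\<not> n_cell_reversible s l r f Null n"
proof
  assume "n_cell_reversible s l r f Null n"
  then obtain z where z: "length z = n" "set z \<subseteq> {0..<s}" "global_map l r f Null z = y"
    using n_cell_reversible_preimage assms(1,3) by blast
  with assms(2) have "z \<noteq> []" by auto
  with z assms(4) have "window Null z l r n \<in> foldl (null_delta s l r f) (null_root s l r) y"
    using window_in_null_run[of z s l r n f] assms(1) by simp
  moreover have "window Null z l r n \<in> null_accept s l r"
    using window_end_null_accept window_in_tuples[OF z(2) \<open>z \<noteq> []\<close>] z(1) by blast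
  ultimately show False using assms(5) by blast
qed

lemma not_periodic_reversible_if_negative:
  assumes "length y = n" "n \<ge> 1" "set y \<subseteq> {0..<s}" "l + r \<ge> 1"
    and "foldl (per_delta s l r f) (per_root s l r) y \<inter> per_root s l r = {}"
  shows "\<not> n_cell_reversible s l r f Periodic n"
proof
  assume "n_cell_reversible s l r f Periodic n"
  then obtain z where z: "length z = n" "set z \<subseteq> {0..<s}" "global_map l r f Periodic z = y"
    using n_cell_reversible_preimage assms(1,3) by blast
  with assms(2) have "z \<noteq> []" by auto
  with z assms(4) have "(window Periodic z l r 0, window Periodic z l r n)
                          \<in> foldl (per_delta s l r f) (per_root s l r) y"
    using window_pair_in_per_run[of z s l r n f] assms(1) by simp
  moreover have "(window Periodic z l r 0, window Periodic z l r n) \<in> per_root s l r"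
    using window_end_periodic[OF \<open>z \<noteq> []\<close>] window_in_tuples[OF z(2) \<open>z \<noteq> []\<close>] z(1)
    unfolding per_root_def by auto
  ultimately show False using assms(5) by blast
qed

theorem theorem3:
  fixes s l r :: nat and f :: "nat list \<Rightarrow> nat"
  assumes "s \<ge> 1"
    and "l + 1 + r \<ge> 2"
    and "\<forall>xs \<in> tuples s (l + 1 + r). f xs < s"
  shows "(\<forall>(N :: nat list set) k (i :: nat) (len :: nat \<Rightarrow> nat) (x :: nat \<Rightarrow> nat).
           N \<in> rg_vertices (null_root s l r) (null_delta s l r f) {0..<s}
         \<and> N \<inter> null_accept s l r = {}
         \<and> rg_value (null_root s l r) (null_delta s l r f) {0..<s} N = k \<and> k \<ge> 1
         \<and> (\<forall>j<i. \<exists>C. rg_circuit (null_root s l r) (null_delta s l r f) {0..<s} C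
                       \<and> N \<in> set C \<and> length C = len j)
         \<longrightarrow> \<not> n_cell_reversible s l r f Null (k + (\<Sum>j<i. x j * len j)))
       \<and> (\<forall>(N :: (nat list \<times> nat list) set) k (i :: nat) (len :: nat \<Rightarrow> nat) (x :: nat \<Rightarrow> nat).
           N \<in> rg_vertices (per_root s l r) (per_delta s l r f) {0..<s}
         \<and> N \<inter> per_root s l r = {}
         \<and> rg_value (per_root s l r) (per_delta s l r f) {0..<s} N = k \<and> k \<ge> 1
         \<and> (\<forall>j<i. \<exists>C. rg_circuit (per_root s l r) (per_delta s l r f) {0..<s} C
                       \<and> N \<in> set C \<and> length C = len j)
         \<longrightarrow> \<not> n_cell_reversible s l r f Periodic (k + (\<Sum>j<i. x j * len j)))"
proof (intro conjI allI impI; elim conjE)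
  fix N :: "nat list set" and k i and len x :: "nat \<Rightarrow> nat"
  let ?root = "null_root s l r" and ?delta = "null_delta s l r f"
  assume vertex: "N \<in> rg_vertices ?root ?delta {0..<s}"
    and negative: "N \<inter> null_accept s l r = {}"
    and N_value: "rg_value ?root ?delta {0..<s} N = k" "k \<ge> 1"
    and circuits: "\<forall>j<i. \<exists>C. rg_circuit ?root ?delta {0..<s} C \<and> N \<in> set C \<and> length C = len j"
  from rg_word_through_circuits[OF vertex circuits, of x] obtain y
    where "length y = k + (\<Sum>j<i. x j * len j)" "set y \<subseteq> {0..<s}" "foldl ?delta ?root y = N"
    unfolding N_value(1) by blast
  then show "\<not> n_cell_reversible s l r f Null (k + (\<Sum>j<i. x j * len j))"
    using not_null_reversible_if_negative negative N_value(2) assms(2) by simp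
next
  fix N :: "(nat list \<times> nat list) set" and k i and len x :: "nat \<Rightarrow> nat"
  let ?root = "per_root s l r" and ?delta = "per_delta s l r f"
  assume vertex: "N \<in> rg_vertices ?root ?delta {0..<s}"
    and negative: "N \<inter> per_root s l r = {}"
    and N_value: "rg_value ?root ?delta {0..<s} N = k" "k \<ge> 1"
    and circuits: "\<forall>j<i. \<exists>C. rg_circuit ?root ?delta {0..<s} C \<and> N \<in> set C \<and> length C = len j"
  from rg_word_through_circuits[OF vertex circuits, of x] obtain y
    where "length y = k + (\<Sum>j<i. x j * len j)" "set y \<subseteq> {0..<s}" "foldl ?delta ?root y = N"
    unfolding N_value(1) by blast
  then show "\<not> n_cell_reversible s l r f Periodic (k + (\<Sum>j<i. x j * len j))"
    using not_periodic_reversible_if_negative negative N_value(2) assms(2) by simp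
qed

end
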